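(* Let $k$ be a field of characteristic $p>0$, let $d_1,\ldots,d_n$ be positive integers and $A = k[x_1,\ldots,x_n]/(x_1^{d_1}, \ldots, x_n^{d_n})$. Write $d_i = N_i p + r_i$ with $N_i$ integers and $0 < r_i \le p$. Let $\Lambda\subseteq\{1,\ldots,n\}$ be an index set such that $d_i>r_i$ for all $i \in \Lambda$, and let $m=\sum_{i=1}^nN_i-|\Lambda|+1$. If \[\sum_{i \in \Lambda}r_i \le \frac{\sum_{i=1}^n(d_i-1)-mp}{2}, \] or equivalently \[ \sum_{i \in \Lambda}r_i \le \sum_{i \notin \Lambda} r_i -n+(|\Lambda|-1)p, \] then $A$ fails to have the strong Lefschetz property.
   Context: $A$ is graded by degree, $A=\bigoplus_{i\ge0} A_i$. A linear map has maximal rank if it is injective or surjective. A graded artinian algebra $A$ has the strong Lefschetz property if there is a linear form $\ell\in A_1$ such that for all $i\ge 0$ and all $m\ge 1$ the map $A_i\to A_{i+m}$, $a\mapsto \ell^m a$, has maximal rank. *)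

theory Defs
  imports Main
begin

text \<open>Model of A = k[x_0,...,x_{n-1}]/(x_0^{d_0},...,x_{n-1}^{d_{n-1}}) via its monomial basis.
An element of A is a k-valued coefficient function on exponent vectors supported on standard monomials.\<close>

definition std_mon :: "(nat \<Rightarrow> nat) \<Rightarrow> nat \<Rightarrow> (nat \<Rightarrow> nat) \<Rightarrow> bool" where
  "std_mon d n a \<longleftrightarrow> (\<forall>j<n. a j < d j) \<and> (\<forall>j\<ge>n. a j = 0)"

definition mdeg :: "nat \<Rightarrow> (nat \<Rightarrow> nat) \<Rightarrow> nat" where
  "mdeg n a = (\<Sum>j<n. a j)"

definition Acomp :: "(nat \<Rightarrow> nat) \<Rightarrow> nat \<Rightarrow> nat \<Rightarrow> ((nat \<Rightarrow> nat) \<Rightarrow> 'k::field) set" where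
  "Acomp d n i = {f. \<forall>a. f a \<noteq> 0 \<longrightarrow> std_mon d n a \<and> mdeg n a = i}"

definition mul_var :: "(nat \<Rightarrow> nat) \<Rightarrow> nat \<Rightarrow> nat \<Rightarrow> ((nat \<Rightarrow> nat) \<Rightarrow> 'k::field) \<Rightarrow> ((nat \<Rightarrow> nat) \<Rightarrow> 'k)" where
  "mul_var d n j f = (\<lambda>a. if std_mon d n a \<and> 1 \<le> a j then f (a(j := a j - 1)) else 0)"

definition mul_lin :: "(nat \<Rightarrow> nat) \<Rightarrow> nat \<Rightarrow> (nat \<Rightarrow> 'k::field) \<Rightarrow> ((nat \<Rightarrow> nat) \<Rightarrow> 'k) \<Rightarrow> ((nat \<Rightarrow> nat) \<Rightarrow> 'k)" where
  "mul_lin d n c f = (\<lambda>a. \<Sum>j<n. c j * mul_var d n j f a)"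

definition maximal_rank :: "('a \<Rightarrow> 'b) \<Rightarrow> 'a set \<Rightarrow> 'b set \<Rightarrow> bool" where
  "maximal_rank F V W \<longleftrightarrow> inj_on F V \<or> F ` V = W"

definition has_SLP :: "(nat \<Rightarrow> nat) \<Rightarrow> nat \<Rightarrow> 'k::field itself \<Rightarrow> bool" where
  "has_SLP d n _ \<longleftrightarrow> (\<exists>c :: nat \<Rightarrow> 'k. \<forall>i m. 1 \<le> m \<longrightarrow>
      maximal_rank (mul_lin d n c ^^ m) (Acomp d n i :: ((nat \<Rightarrow> nat) \<Rightarrow> 'k) set) (Acomp d n (i + m)))"

end

theory Submission
  imports Defs "HOL.Modules" "HOL-Library.Function_Algebras" "HOL-Computational_Algebra.Primes"
begin

text \<open>Let \<ell> = \<Sum> c_j x_j be any linear form. Multiplications by the c_j x_j commute, so in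
  characteristic p we have \<ell>^p = \<Sum> c_j^p x_j^p. Let x^a = \<Prod>_{i \<in> \<Lambda>} x_i^{r_i}, of degree s,
  and e_j = N_j - [j \<in> \<Lambda>]. On the ideal (x^a) the power (x_j^p)^{e_j + 1} vanishes, since
  r_j + p N_j = d_j for j \<in> \<Lambda> and p (N_j + 1) \<ge> d_j otherwise. Hence \<ell>^M kills (x^a) for
  M = p (\<Sum> e_j + 1) = m p, and \<ell>^M : A_s \<rightarrow> A_{s+M} is not injective. The hypothesis reads
  2 s + M \<le> \<Sum> (d_i - 1), so some monomial x^b divisible by x^a has a cofactor x^t of degree s + M
  in the socle monomial. If x^t = \<ell>^M g, then 0 \<noteq> x^b x^t = \<ell>^M (x^b g) = 0; so \<ell>^M is not
  surjective either.\<close>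

section \<open>Powers of sums of commuting additive maps\<close>

lemma additive_funpow:
  fixes T :: "'a::ab_group_add \<Rightarrow> 'a"
  shows "additive T \<Longrightarrow> additive (T ^^ k)"
  by (induction k) (simp_all add: additive_def)

lemma additive_sum_fun:
  "(\<And>j. j \<in> J \<Longrightarrow> additive (T j)) \<Longrightarrow> additive (\<lambda>x. \<Sum>j\<in>J. T j x)"
  by (auto simp: additive_def sum.distrib)

lemma additive_of_nat_mult:
  fixes T :: "'v::comm_ring_1 \<Rightarrow> 'v"
  assumes "additive T"
  shows "T (of_nat k * x) = of_nat k * T x"
  by (induction k) (simp_all add: additive.zero[OF assms] additive.add[OF assms] algebra_simps)

lemma funpow_commute_apply:
  "(\<And>x. T (S x) = S (T x)) \<Longrightarrow> (T ^^ k) (S x) = S ((T ^^ k) x)"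
  by (induction k) auto

lemma sum_choose_Suc:
  fixes G :: "nat \<Rightarrow> nat \<Rightarrow> 'v::comm_ring_1"
  shows "(\<Sum>k\<le>n. of_nat (n choose k) * G (Suc k) (n - k))
       + (\<Sum>k\<le>n. of_nat (n choose k) * G k (Suc n - k))
       = (\<Sum>k\<le>Suc n. of_nat (Suc n choose k) * G k (Suc n - k))"
proof -
  have "(\<Sum>k\<le>n. of_nat (n choose k) * G k (Suc n - k))
      = (\<Sum>k\<le>Suc n. of_nat (n choose k) * G k (Suc n - k))"
    by (simp add: binomial_eq_0)
  also have "\<dots> = G 0 (Suc n) + (\<Sum>k\<le>n. of_nat (n choose Suc k) * G (Suc k) (n - k))"
    by (subst sum.atMost_Suc_shift) simp
  finally have "(\<Sum>k\<le>n. of_nat (n choose k) * G k (Suc n - k))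
      = G 0 (Suc n) + (\<Sum>k\<le>n. of_nat (n choose Suc k) * G (Suc k) (n - k))" .
  moreover have "(\<Sum>k\<le>Suc n. of_nat (Suc n choose k) * G k (Suc n - k))
      = G 0 (Suc n) + (\<Sum>k\<le>n. of_nat ((n choose k) + (n choose Suc k)) * G (Suc k) (n - k))"
    by (subst sum.atMost_Suc_shift) simp
  ultimately show ?thesis
    by (simp add: sum.distrib algebra_simps)
qed

lemma funpow_plus_binomial:
  fixes T S :: "'v::comm_ring_1 \<Rightarrow> 'v"
  assumes T: "additive T" and S: "additive S" and comm: "\<And>x. T (S x) = S (T x)"
  shows "((\<lambda>x. T x + S x) ^^ n) x = (\<Sum>k\<le>n. of_nat (n choose k) * (T ^^ k) ((S ^^ (n - k)) x))"
proof (induction n)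
  case (Suc n)
  let ?B = "\<Sum>k\<le>n. of_nat (n choose k) * (T ^^ k) ((S ^^ (n - k)) x)"
  have "((\<lambda>x. T x + S x) ^^ Suc n) x = T ?B + S ?B"
    using Suc.IH by simp
  also have "T ?B = (\<Sum>k\<le>n. of_nat (n choose k) * (T ^^ Suc k) ((S ^^ (n - k)) x))"
    by (simp add: additive.sum[OF T] additive_of_nat_mult[OF T])
  also have "S ?B = (\<Sum>k\<le>n. of_nat (n choose k) * (T ^^ k) ((S ^^ (Suc n - k)) x))"
    by (auto simp: additive.sum[OF S] additive_of_nat_mult[OF S] funpow_commute_apply[of T S, OF comm]
        Suc_diff_le intro!: sum.cong)
  finally show ?case
    by (simp only: sum_choose_Suc[of n "\<lambda>k l. (T ^^ k) ((S ^^ l) x)"])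
qed simp

lemma funpow_plus_prime:
  fixes T S :: "'v::comm_ring_1 \<Rightarrow> 'v"
  assumes "additive T" "additive S" "\<And>x. T (S x) = S (T x)"
    and p: "prime p" "of_nat p = (0::'v)"
  shows "((\<lambda>x. T x + S x) ^^ p) x = (T ^^ p) x + (S ^^ p) x"
proof -
  have "of_nat (p choose k) = (0::'v)" if "0 < k" "k < p" for k
  proof -
    have "p dvd (p choose k)"
      using dvd_choose_prime[of k p] that p(1) by simp
    then obtain q where "p choose k = p * q"
      by (rule dvdE)
    then show ?thesis using p by simp
  qed
  then have "(\<Sum>k\<le>p. of_nat (p choose k) * (T ^^ k) ((S ^^ (p - k)) x))
      = (\<Sum>k\<in>{0, p}. of_nat (p choose k) * (T ^^ k) ((S ^^ (p - k)) x))"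
    by (intro sum.mono_neutral_right) auto
  then show ?thesis
    using funpow_plus_binomial[OF assms(1-3)] prime_gt_0_nat[OF p(1)] by (simp add: add.commute)
qed

lemma funpow_sum_prime:
  fixes T :: "'j \<Rightarrow> 'v::comm_ring_1 \<Rightarrow> 'v"
  assumes "finite J" "\<And>j. j \<in> J \<Longrightarrow> additive (T j)"
    and "\<And>i j x. i \<in> J \<Longrightarrow> j \<in> J \<Longrightarrow> T i (T j x) = T j (T i x)"
    and p: "prime p" "of_nat p = (0::'v)"
  shows "((\<lambda>x. \<Sum>j\<in>J. T j x) ^^ p) x = (\<Sum>j\<in>J. (T j ^^ p) x)"
  using assms(1-3)
proof (induction J arbitrary: x rule: finite_induct)
  case empty
  then show ?case
    using prime_gt_0_nat[OF p(1)] by (cases p) simp_all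
next
  case (insert a J)
  have "((\<lambda>x. \<Sum>j\<in>insert a J. T j x) ^^ p) x = ((\<lambda>x. T a x + (\<Sum>j\<in>J. T j x)) ^^ p) x"
    using insert.hyps by simp
  also have "\<dots> = (T a ^^ p) x + ((\<lambda>x. \<Sum>j\<in>J. T j x) ^^ p) x"
    using insert.prems by (intro funpow_plus_prime additive_sum_fun p)
      (auto simp: additive.sum)
  finally show ?case
    using insert by simp
qed

lemma sum_mem_closed:
  assumes "finite J" "0 \<in> W" "\<And>x y. x \<in> W \<Longrightarrow> y \<in> W \<Longrightarrow> x + y \<in> W"
    and "\<And>j. j \<in> J \<Longrightarrow> g j \<in> W"
  shows "(\<Sum>j\<in>J. g j) \<in> W"
  using assms by (induction J rule: finite_induct) auto

lemma funpow_mem_closed: "(\<And>x. x \<in> W \<Longrightarrow> T x \<in> W) \<Longrightarrow> x \<in> W \<Longrightarrow> (T ^^ k) x \<in> W"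
  by (induction k) auto

lemma funpow_sum_vanishes:
  fixes T :: "'j \<Rightarrow> 'v::comm_ring_1 \<Rightarrow> 'v"
  assumes "finite J" and "\<And>j. j \<in> J \<Longrightarrow> additive (T j)"
    and "\<And>i j x. i \<in> J \<Longrightarrow> j \<in> J \<Longrightarrow> T i (T j x) = T j (T i x)"
    and W: "0 \<in> W" "\<And>x y. x \<in> W \<Longrightarrow> y \<in> W \<Longrightarrow> x + y \<in> W"
    and "\<And>j x. j \<in> J \<Longrightarrow> x \<in> W \<Longrightarrow> T j x \<in> W"
    and "\<And>j x. j \<in> J \<Longrightarrow> x \<in> W \<Longrightarrow> (T j ^^ Suc (e j)) x = 0"
    and "x \<in> W"
  shows "((\<lambda>x. \<Sum>j\<in>J. T j x) ^^ Suc (\<Sum>j\<in>J. e j)) x = 0"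
  using assms(1-3,6-8)
proof (induction J arbitrary: x rule: finite_induct)
  case (insert a J)
  define S where "S = (\<lambda>x. \<Sum>j\<in>J. T j x)"
  have T: "additive (T a)" and S: "additive S"
    using insert.prems(1) by (auto simp: S_def intro: additive_sum_fun)
  have comm: "T a (S y) = S (T a y)" for y
    using insert.prems(1,2) by (simp add: S_def additive.sum)
  have "S y \<in> W" if "y \<in> W" for y
    unfolding S_def using insert.hyps(1) insert.prems(3) that W by (intro sum_mem_closed) auto
  then have S_pow_W: "(S ^^ k) x \<in> W" for k
    using insert.prems(5) by (rule funpow_mem_closed)
  have S_vanish: "(S ^^ Suc (\<Sum>j\<in>J. e j)) y = 0" if "y \<in> W" for y
    unfolding S_def using insert.prems that by (intro insert.IH) auto
  have T_vanish: "(T a ^^ k) y = 0" if "Suc (e a) \<le> k" "y \<in> W" for k y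
  proof -
    have "k = (k - Suc (e a)) + Suc (e a)"
      using that(1) by simp
    then have "(T a ^^ k) y = (T a ^^ (k - Suc (e a))) ((T a ^^ Suc (e a)) y)"
      by (metis funpow_add comp_apply)
    then show ?thesis
      using insert.prems(4) that(2) additive.zero[OF additive_funpow[OF T]] by simp
  qed
  let ?N = "Suc (e a + (\<Sum>j\<in>J. e j))"
  have "((\<lambda>x. \<Sum>j\<in>insert a J. T j x) ^^ Suc (\<Sum>j\<in>insert a J. e j)) x
      = ((\<lambda>x. T a x + S x) ^^ ?N) x"
    using insert.hyps by (simp add: S_def)
  also have "\<dots> = (\<Sum>k\<le>?N. of_nat (?N choose k) * (T a ^^ k) ((S ^^ (?N - k)) x))"
    using T S comm by (rule funpow_plus_binomial)
  also have "\<dots> = 0"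
  proof (intro sum.neutral ballI)
    fix k
    have "(T a ^^ k) ((S ^^ (?N - k)) x) = 0"
    proof (cases "Suc (e a) \<le> k")
      case True
      then show ?thesis using T_vanish S_pow_W by simp
    next
      case False
      then have "?N - k = Suc (\<Sum>j\<in>J. e j) + (?N - k - Suc (\<Sum>j\<in>J. e j))"
        by simp
      then have "(S ^^ (?N - k)) x = 0"
        using S_vanish S_pow_W by (metis funpow_add comp_apply)
      then show ?thesis
        using additive.zero[OF additive_funpow[OF T]] by simp
    qed
    then show "of_nat (?N choose k) * (T a ^^ k) ((S ^^ (?N - k)) x) = 0"
      by simp
  qed
  finally show ?case .
qed simp

lemma sum_fun_apply: "(\<Sum>j\<in>J. g j) x = (\<Sum>j\<in>J. g j x)"
  by (induction J rule: infinite_finite_induct) auto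

section \<open>Monomials and multiplication operators in the truncated polynomial ring\<close>

lemma std_mon_mono: "std_mon d n a \<Longrightarrow> (\<And>i. b i \<le> a i) \<Longrightarrow> std_mon d n b"
  unfolding std_mon_def by (metis le_zero_eq order.strict_trans1)

lemma mdeg_upd_Suc:
  assumes "j < n"
  shows "mdeg n (a(j := Suc (a j))) = Suc (mdeg n a)"
proof -
  have "mdeg n (a(j := Suc (a j))) = Suc (a j) + (\<Sum>i\<in>{..<n} - {j}. a i)"
    using assms by (simp add: mdeg_def sum.remove)
  also have "\<dots> = Suc (mdeg n a)"
    using assms by (simp add: mdeg_def sum.remove)
  finally show ?thesis .
qed

lemma std_mon_exists_above:
  assumes "std_mon d n a" and "mdeg n a \<le> k" and "k \<le> (\<Sum>i<n. d i - 1)"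
  shows "\<exists>b. std_mon d n b \<and> (\<forall>i. a i \<le> b i) \<and> mdeg n b = k"
  using assms(2,3)
proof (induction k rule: dec_induct)
  case base
  then show ?case using assms(1) by auto
next
  case (step k)
  then obtain b where b: "std_mon d n b" "\<forall>i. a i \<le> b i" "mdeg n b = k"
    by auto
  have "\<exists>j<n. Suc (b j) < d j"
  proof (rule ccontr)
    assume "\<not> ?thesis"
    then have "(\<Sum>i<n. d i - 1) \<le> mdeg n b"
      unfolding mdeg_def by (intro sum_mono) auto
    then show False
      using step.prems b(3) by simp
  qed
  then obtain j where j: "j < n" "Suc (b j) < d j"
    by blast
  have "std_mon d n (b(j := Suc (b j)))"
    using b(1) j by (auto simp: std_mon_def)
  moreover have "\<forall>i. a i \<le> (b(j := Suc (b j))) i"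
    using b(2) by (simp add: le_Suc_eq)
  moreover have "mdeg n (b(j := Suc (b j))) = Suc k"
    using b(3) j(1) by (simp add: mdeg_upd_Suc)
  ultimately show ?case
    by blast
qed

definition mon :: "(nat \<Rightarrow> nat) \<Rightarrow> (nat \<Rightarrow> nat) \<Rightarrow> 'k::field" where
  "mon a = (\<lambda>b. of_bool (b = a))"

lemma mon_mem_Acomp: "std_mon d n a \<Longrightarrow> mon a \<in> Acomp d n (mdeg n a)"
  by (simp add: mon_def Acomp_def)

lemma mul_var_scale: "mul_var d n j (\<lambda>a. c * f a) = (\<lambda>a. c * mul_var d n j f a)"
  by (simp add: mul_var_def fun_eq_iff)

lemma mul_var_commute: "mul_var d n i (mul_var d n j f) = mul_var d n j (mul_var d n i f)"
proof (cases "i = j")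
  case False
  then show ?thesis
    by (auto simp: mul_var_def fun_eq_iff fun_upd_twist intro: std_mon_mono)
qed simp

lemma mul_var_funpow:
  assumes "\<And>a. \<not> std_mon d n a \<Longrightarrow> f a = 0"
  shows "(mul_var d n j ^^ k) f
    = (\<lambda>a. if std_mon d n a \<and> k \<le> a j then f (a(j := a j - k)) else (0::'k::field))"
proof (induction k)
  case 0
  then show ?case using assms by (auto simp: fun_eq_iff)
next
  case (Suc k)
  then show ?case
    by (auto simp: fun_eq_iff mul_var_def intro: std_mon_mono)
qed

definition mul_term :: "(nat \<Rightarrow> nat) \<Rightarrow> nat \<Rightarrow> (nat \<Rightarrow> 'k::field) \<Rightarrow> nat
    \<Rightarrow> ((nat \<Rightarrow> nat) \<Rightarrow> 'k) \<Rightarrow> ((nat \<Rightarrow> nat) \<Rightarrow> 'k)" where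
  "mul_term d n c j f = (\<lambda>a. c j * mul_var d n j f a)"

lemma mul_lin_eq_sum: "mul_lin d n c = (\<lambda>f. \<Sum>j<n. mul_term d n c j f)"
  by (simp add: fun_eq_iff mul_lin_def mul_term_def sum_fun_apply)

lemma additive_mul_term: "additive (mul_term d n c j)"
  by (simp add: additive_def mul_term_def mul_var_def fun_eq_iff distrib_left)

lemma mul_term_commute:
  "mul_term d n c i (mul_term d n c j f) = mul_term d n c j (mul_term d n c i f)"
  by (simp add: mul_term_def mul_var_scale mul_var_commute[of d n i j] fun_eq_iff ac_simps)

lemma mul_term_funpow: "(mul_term d n c j ^^ k) f = (\<lambda>a. c j ^ k * (mul_var d n j ^^ k) f a)"
proof (induction k)
  case (Suc k)
  have "(mul_term d n c j ^^ Suc k) f = mul_term d n c j ((mul_term d n c j ^^ k) f)"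
    by simp
  also have "\<dots> = (\<lambda>a. c j ^ Suc k * (mul_var d n j ^^ Suc k) f a)"
    unfolding Suc mul_term_def mul_var_scale by (simp add: fun_eq_iff)
  finally show ?case .
qed simp

definition mon_multiples ::
    "(nat \<Rightarrow> nat) \<Rightarrow> nat \<Rightarrow> (nat \<Rightarrow> nat) \<Rightarrow> ((nat \<Rightarrow> nat) \<Rightarrow> 'k::field) set" where
  "mon_multiples d n b = {f. \<forall>a. f a \<noteq> 0 \<longrightarrow> std_mon d n a \<and> (\<forall>i. b i \<le> a i)}"

lemma zero_mem_mon_multiples: "0 \<in> mon_multiples d n b"
  by (simp add: mon_multiples_def)

lemma add_mem_mon_multiples:
  "f \<in> mon_multiples d n b \<Longrightarrow> g \<in> mon_multiples d n b \<Longrightarrow> f + g \<in> mon_multiples d n b"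
  by (auto simp: mon_multiples_def) (metis add.right_neutral)+

lemma mul_term_mem_mon_multiples:
  "f \<in> mon_multiples d n b \<Longrightarrow> mul_term d n c j f \<in> mon_multiples d n b"
  unfolding mon_multiples_def mul_term_def mul_var_def
  by (auto split: if_splits) (metis fun_upd_apply diff_le_self order.trans)

lemma mul_var_funpow_mon_multiples:
  assumes "f \<in> mon_multiples d n b" and "j < n" and "d j \<le> b j + k"
  shows "(mul_var d n j ^^ k) f = 0"
proof -
  have "f (a(j := a j - k)) = 0" if "std_mon d n a" "k \<le> a j" for a
  proof -
    have "a j < d j" using that(1) \<open>j < n\<close> by (simp add: std_mon_def)
    then have "\<not> b j \<le> (a(j := a j - k)) j" using that(2) assms(3) by simp
    then show ?thesis using assms(1) unfolding mon_multiples_def by blast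
  qed
  moreover have "f a = 0" if "\<not> std_mon d n a" for a
    using assms(1) that by (auto simp: mon_multiples_def)
  ultimately show ?thesis
    by (simp add: mul_var_funpow fun_eq_iff)
qed

definition mul_mon :: "(nat \<Rightarrow> nat) \<Rightarrow> nat \<Rightarrow> (nat \<Rightarrow> nat)
    \<Rightarrow> ((nat \<Rightarrow> nat) \<Rightarrow> 'k::field) \<Rightarrow> ((nat \<Rightarrow> nat) \<Rightarrow> 'k)" where
  "mul_mon d n b f = (\<lambda>a. if std_mon d n a \<and> (\<forall>i. b i \<le> a i) then f (\<lambda>i. a i - b i) else 0)"

lemma mul_mon_scale: "mul_mon d n b (\<lambda>a. c * f a) = (\<lambda>a. c * mul_mon d n b f a)"
  by (simp add: mul_mon_def fun_eq_iff)

lemma additive_mul_mon: "additive (mul_mon d n b)"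
  by (simp add: additive_def mul_mon_def fun_eq_iff)

lemma mul_mon_mul_var: "mul_mon d n b (mul_var d n j f) = mul_var d n j (mul_mon d n b f)"
proof
  fix a :: "nat \<Rightarrow> nat"
  let ?a' = "a(j := a j - 1)"
  show "mul_mon d n b (mul_var d n j f) a = mul_var d n j (mul_mon d n b f) a"
  proof (cases "std_mon d n a")
    case std: True
    then have std': "std_mon d n (\<lambda>i. a i - b i)" "std_mon d n ?a'"
      by (auto intro: std_mon_mono)
    show ?thesis
    proof (cases "(\<forall>i. b i \<le> a i) \<and> b j < a j")
      case True
      then have "1 \<le> a j" "1 \<le> a j - b j" "\<forall>i. b i \<le> ?a' i"
        by auto
      then have "mul_var d n j (mul_mon d n b f) a = f (\<lambda>i. ?a' i - b i)"
        using std std' by (simp add: mul_mon_def mul_var_def del: fun_upd_apply)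
      moreover have "mul_mon d n b (mul_var d n j f) a = f ((\<lambda>i. a i - b i)(j := a j - b j - 1))"
        using std std' True \<open>1 \<le> a j - b j\<close> by (simp add: mul_mon_def mul_var_def)
      moreover have "(\<lambda>i. a i - b i)(j := a j - b j - 1) = (\<lambda>i. ?a' i - b i)"
        by (simp add: fun_eq_iff)
      ultimately show ?thesis
        by (simp only:)
    next
      case False
      have "\<not> (1 \<le> a j \<and> (\<forall>i. b i \<le> ?a' i))"
      proof
        assume H: "1 \<le> a j \<and> (\<forall>i. b i \<le> ?a' i)"
        then have "b j \<le> ?a' j"
          by blast
        then have "b j < a j"
          using conjunct1[OF H] by simp
        moreover have "b i \<le> a i" for i
          using H \<open>b j < a j\<close> by (cases "i = j") (auto dest: spec[of _ i])
        ultimately show False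
          using False by blast
      qed
      then show ?thesis
        using std std' False by (auto simp: mul_mon_def mul_var_def simp del: fun_upd_apply)
    qed
  qed (simp add: mul_mon_def mul_var_def)
qed

lemma mul_mon_mul_lin: "mul_mon d n b (mul_lin d n c f) = mul_lin d n c (mul_mon d n b f)"
  unfolding mul_lin_eq_sum additive.sum[OF additive_mul_mon] mul_term_def mul_mon_scale mul_mon_mul_var
  ..

lemma mul_mon_mem_mon_multiples: "(\<And>i. a i \<le> b i) \<Longrightarrow> mul_mon d n b f \<in> mon_multiples d n a"
  by (auto simp: mul_mon_def mon_multiples_def split: if_splits intro: le_trans)

section \<open>Failure of the strong Lefschetz property\<close>

lemma mul_lin_funpow_vanishes:
  assumes "CHAR('k::field) = p" "p > 0"
    and "\<forall>j<n. d j \<le> b j + p * Suc (e j)"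
    and "f \<in> mon_multiples d n b"
  shows "(mul_lin d n c ^^ (p * Suc (\<Sum>j<n. e j))) f = (0 :: (nat \<Rightarrow> nat) \<Rightarrow> 'k)"
proof -
  have p_prime: "prime p"
    using assms(1,2) prime_CHAR_semidom[where 'a='k] by simp
  have p_zero: "of_nat p = (0 :: (nat \<Rightarrow> nat) \<Rightarrow> 'k)"
    using assms(1) of_nat_CHAR[where 'a='k] by (simp add: of_nat_fun zero_fun_def)
  have "(mul_lin d n c ^^ p) g = (\<Sum>j<n. (mul_term d n c j ^^ p) g)" for g
    unfolding mul_lin_eq_sum
    by (rule funpow_sum_prime) (simp_all add: additive_mul_term mul_term_commute p_prime p_zero)
  then have frobenius: "mul_lin d n c ^^ p = (\<lambda>g. \<Sum>j<n. (mul_term d n c j ^^ p) g)"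
    by (rule ext)
  have "(mul_lin d n c ^^ (p * Suc (\<Sum>j<n. e j))) f
      = ((\<lambda>g. \<Sum>j<n. (mul_term d n c j ^^ p) g) ^^ Suc (\<Sum>j<n. e j)) f"
    by (simp only: frobenius flip: funpow_mult)
  also have "\<dots> = 0"
  proof (rule funpow_sum_vanishes[where W = "mon_multiples d n b"])
    show "((mul_term d n c j ^^ p) ^^ Suc (e j)) g = 0"
      if "j \<in> {..<n}" "g \<in> mon_multiples d n b" for j g
      using that assms(3) mul_var_funpow_mon_multiples[of g d n b j "p * Suc (e j)"]
      by (simp add: funpow_mult mul_term_funpow mult.commute zero_fun_def)
    show "(mul_term d n c i ^^ p) ((mul_term d n c j ^^ p) g)
        = (mul_term d n c j ^^ p) ((mul_term d n c i ^^ p) g)" for i j g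
      by (rule funpow_commute_apply, rule funpow_commute_apply[symmetric], rule mul_term_commute)
    show "(mul_term d n c j ^^ p) g \<in> mon_multiples d n b" if "g \<in> mon_multiples d n b" for j g
      using mul_term_mem_mon_multiples that by (rule funpow_mem_closed)
  qed (auto intro: additive_funpow additive_mul_term zero_mem_mon_multiples
      add_mem_mon_multiples assms(4))
  finally show ?thesis .
qed

lemma mul_lin_funpow_not_inj:
  assumes "std_mon d n a" and "\<And>f. f \<in> mon_multiples d n a \<Longrightarrow> (mul_lin d n c ^^ M) f = 0"
  shows "\<not> inj_on (mul_lin d n c ^^ M) (Acomp d n (mdeg n a))"
proof
  assume inj: "inj_on (mul_lin d n c ^^ M) (Acomp d n (mdeg n a))"
  have "mon a \<in> mon_multiples d n a"
    using assms(1) by (simp add: mon_def mon_multiples_def)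
  then have "(mul_lin d n c ^^ M) (mon a) = (mul_lin d n c ^^ M) 0"
    using assms(2) zero_mem_mon_multiples by metis
  moreover have "mon a \<in> Acomp d n (mdeg n a)" "0 \<in> Acomp d n (mdeg n a)"
    using mon_mem_Acomp[OF assms(1)] by (simp_all add: Acomp_def)
  ultimately have "mon a = (0 :: (nat \<Rightarrow> nat) \<Rightarrow> 'a)"
    by (rule inj_onD[OF inj])
  then have "mon a a = (0 :: 'a)"
    by simp
  then show False
    by (simp add: mon_def)
qed

lemma mul_lin_funpow_not_onto:
  assumes a: "std_mon d n a"
    and vanish: "\<And>f. f \<in> mon_multiples d n a \<Longrightarrow> (mul_lin d n c ^^ M) f = 0"
    and deg: "2 * mdeg n a + M \<le> (\<Sum>i<n. d i - 1)"
  shows "(mul_lin d n c ^^ M) ` Acomp d n (mdeg n a) \<noteq> Acomp d n (mdeg n a + M)"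
proof
  assume onto: "(mul_lin d n c ^^ M) ` Acomp d n (mdeg n a) = Acomp d n (mdeg n a + M)"
  define top where "top i = (if i < n then d i - 1 else 0)" for i
  have "mdeg n a \<le> (\<Sum>i<n. d i - 1) - (mdeg n a + M)"
    using deg by linarith
  then obtain b where
    b: "std_mon d n b" "\<forall>i. a i \<le> b i" "mdeg n b = (\<Sum>i<n. d i - 1) - (mdeg n a + M)"
    using std_mon_exists_above[OF a _ diff_le_self] by blast
  have "0 < d i" if "i < n" for i
    using a that by (auto simp: std_mon_def)
  then have top: "std_mon d n top" and b_le_top: "b i \<le> top i" for i
    using b(1) by (auto simp: std_mon_def top_def less_Suc_eq_le)
  define t where "t i = top i - b i" for i
  have "mdeg n t = (\<Sum>i<n. top i) - mdeg n b"
    unfolding mdeg_def t_def by (rule sum_subtractf_nat) (rule b_le_top)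
  then have "mdeg n t = mdeg n a + M"
    using b(3) deg by (simp add: top_def)
  moreover have "std_mon d n t"
    using top by (rule std_mon_mono) (simp add: t_def)
  ultimately have "mon t \<in> (mul_lin d n c ^^ M) ` Acomp d n (mdeg n a)"
    using onto mon_mem_Acomp by metis
  then obtain g where g: "mon t = (mul_lin d n c ^^ M) g"
    by blast
  have "mul_mon d n b (mon t) = (mul_lin d n c ^^ M) (mul_mon d n b g)"
    unfolding g by (rule funpow_commute_apply[symmetric]) (rule mul_mon_mul_lin[symmetric])
  also have "\<dots> = 0"
    using b(2) by (intro vanish mul_mon_mem_mon_multiples) simp
  finally have "mul_mon d n b (mon t) top = (0::'a)"
    by simp
  moreover have "mul_mon d n b (mon t) top = (1::'a)"
    using top b_le_top by (simp add: mul_mon_def mon_def t_def fun_eq_iff)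
  ultimately show False
    by simp
qed

lemma mul_lin_funpow_not_maximal_rank:
  assumes "std_mon d n a"
    and "\<And>f. f \<in> mon_multiples d n a \<Longrightarrow> (mul_lin d n c ^^ M) f = 0"
    and "2 * mdeg n a + M \<le> (\<Sum>i<n. d i - 1)"
  shows "\<not> maximal_rank (mul_lin d n c ^^ M) (Acomp d n (mdeg n a)) (Acomp d n (mdeg n a + M))"
  using mul_lin_funpow_not_inj[OF assms(1,2)] mul_lin_funpow_not_onto[OF assms]
  by (simp add: maximal_rank_def)

lemma not_has_SLP_CHAR:
  assumes "CHAR('k::field) = p" "p > 0" "std_mon d n a"
    and "\<forall>j<n. d j \<le> a j + p * Suc (e j)"
    and "2 * mdeg n a + p * Suc (\<Sum>j<n. e j) \<le> (\<Sum>i<n. d i - 1)"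
  shows "\<not> has_SLP d n TYPE('k)"
proof
  let ?M = "p * Suc (\<Sum>j<n. e j)"
  assume "has_SLP d n TYPE('k)"
  then obtain c :: "nat \<Rightarrow> 'k" where "\<forall>i m. 1 \<le> m \<longrightarrow>
      maximal_rank (mul_lin d n c ^^ m) (Acomp d n i) (Acomp d n (i + m))"
    unfolding has_SLP_def by blast
  then have "maximal_rank (mul_lin d n c ^^ ?M) (Acomp d n (mdeg n a)) (Acomp d n (mdeg n a + ?M))"
    using assms(2) by simp
  moreover have "\<not> maximal_rank (mul_lin d n c ^^ ?M) (Acomp d n (mdeg n a)) (Acomp d n (mdeg n a + ?M))"
    using assms(3) mul_lin_funpow_vanishes[OF assms(1,2,4)] assms(5)
    by (rule mul_lin_funpow_not_maximal_rank)
  ultimately show False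
    by contradiction
qed

lemma sum_minus_of_bool_add_card:
  fixes N :: "'a \<Rightarrow> nat"
  assumes "finite A" "L \<subseteq> A" "\<forall>j\<in>L. 0 < N j"
  shows "(\<Sum>j\<in>A. N j - of_bool (j \<in> L)) + card L = (\<Sum>j\<in>A. N j)"
proof -
  have "A \<inter> {j. j \<in> L} = L"
    using assms(2) by blast
  then have "card L = (\<Sum>j\<in>A. of_bool (j \<in> L))"
    using assms(1) by simp
  also have "(\<Sum>j\<in>A. N j - of_bool (j \<in> L)) + \<dots> = (\<Sum>j\<in>A. N j)"
    unfolding sum.distrib[symmetric] using assms(3) by (intro sum.cong) auto
  finally show ?thesis .
qed

theorem lemma3p4:
  fixes d N r :: "nat \<Rightarrow> nat" and n p :: nat and \<Lambda> :: "nat set"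
  assumes "CHAR('k::field) = p" and "p > 0"
    and "\<forall>i<n. d i > 0"
    and "\<forall>i<n. d i = N i * p + r i \<and> 0 < r i \<and> r i \<le> p"
    and "\<Lambda> \<subseteq> {..<n}"
    and "\<forall>i\<in>\<Lambda>. d i > r i"
    and "m = (\<Sum>i<n. int (N i)) - int (card \<Lambda>) + 1"
    and "2 * (\<Sum>i\<in>\<Lambda>. int (r i)) \<le> (\<Sum>i<n. int (d i) - 1) - m * int p"
  shows "\<not> has_SLP d n TYPE('k)"
proof -
  define a where "a i = (if i \<in> \<Lambda> then r i else 0)" for i
  define e where "e j = N j - of_bool (j \<in> \<Lambda>)" for j
  have N_pos: "\<forall>j\<in>\<Lambda>. 0 < N j"
    using assms(4-6) by (metis add_0 mult_0 not_gr0 order_less_irrefl subsetD lessThan_iff)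
  have "std_mon d n a"
    using assms(3,5,6) by (auto simp: std_mon_def a_def)
  moreover have "\<forall>j<n. d j \<le> a j + p * Suc (e j)"
  proof (intro allI impI)
    fix j
    assume "j < n"
    then show "d j \<le> a j + p * Suc (e j)"
      using assms(4) N_pos by (cases "j \<in> \<Lambda>") (auto simp: a_def e_def mult.commute)
  qed
  moreover have "2 * mdeg n a + p * Suc (\<Sum>j<n. e j) \<le> (\<Sum>i<n. d i - 1)"
  proof -
    have "mdeg n a = (\<Sum>i\<in>\<Lambda>. r i)"
      using assms(5) by (simp add: mdeg_def a_def sum.inter_restrict[symmetric] Int_absorb1)
    moreover have "m = int (Suc (\<Sum>j<n. e j))"
      using sum_minus_of_bool_add_card[OF finite_lessThan assms(5) N_pos] assms(7)
      by (simp add: e_def flip: of_nat_sum)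
    moreover have "int (\<Sum>i<n. d i - 1) = (\<Sum>i<n. int (d i) - 1)"
      using assms(3) by (simp add: of_nat_sum of_nat_diff Suc_le_eq)
    ultimately have "int (2 * mdeg n a + p * Suc (\<Sum>j<n. e j)) \<le> int (\<Sum>i<n. d i - 1)"
      using assms(8) by (simp add: of_nat_sum algebra_simps)
    then show ?thesis
      by (simp only: of_nat_le_iff)
  qed
  ultimately show ?thesis
    by (rule not_has_SLP_CHAR[OF assms(1,2)])
qed

end
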